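(* Let $G$ be a finite, simple, connected graph of order $n$. If $G$ contains a cycle, then $\beta(G)\leq n-g(G)+2$, where $g(G)$ is the girth of $G$ and $\beta(G)$ is the metric dimension of $G$.
   Context: For vertices $x,y$ of a connected graph $G$, $d(x,y)$ denotes the length of a shortest $x$–$y$ path. A set $W\subseteq V(G)$ is a resolving set for $G$ if for every two distinct vertices $u,v\in V(G)$ there exists $w\in W$ with $d(u,w)\neq d(v,w)$. The metric dimension $\beta(G)$ is the minimum cardinality of a resolving set for $G$. If $G$ has a cycle, the girth $g(G)$ is the length of a shortest cycle in $G$. *)

theory Defs
  imports Main
begin

definition simple_graph :: "'a set \<Rightarrow> ('a \<Rightarrow> 'a \<Rightarrow> bool) \<Rightarrow> bool" where
  "simple_graph V E \<longleftrightarrow> finite V \<and> (\<forall>x y. E x y \<longrightarrow> x \<in> V \<and> y \<in> V)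
     \<and> (\<forall>x y. E x y \<longrightarrow> E y x) \<and> (\<forall>x. \<not> E x x)"

text \<open>A walk, given as the list of its vertices; its length is the number of edges.\<close>

definition is_walk :: "'a set \<Rightarrow> ('a \<Rightarrow> 'a \<Rightarrow> bool) \<Rightarrow> 'a list \<Rightarrow> bool" where
  "is_walk V E p \<longleftrightarrow> p \<noteq> [] \<and> set p \<subseteq> V \<and> (\<forall>i. Suc i < length p \<longrightarrow> E (p ! i) (p ! Suc i))"

definition connected_graph :: "'a set \<Rightarrow> ('a \<Rightarrow> 'a \<Rightarrow> bool) \<Rightarrow> bool" where
  "connected_graph V E \<longleftrightarrow> V \<noteq> {} \<and>
     (\<forall>x\<in>V. \<forall>y\<in>V. \<exists>p. is_walk V E p \<and> hd p = x \<and> last p = y)"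

definition dist :: "'a set \<Rightarrow> ('a \<Rightarrow> 'a \<Rightarrow> bool) \<Rightarrow> 'a \<Rightarrow> 'a \<Rightarrow> nat" where
  "dist V E x y = (LEAST k. \<exists>p. is_walk V E p \<and> hd p = x \<and> last p = y \<and> length p = Suc k)"

definition resolving_set :: "'a set \<Rightarrow> ('a \<Rightarrow> 'a \<Rightarrow> bool) \<Rightarrow> 'a set \<Rightarrow> bool" where
  "resolving_set V E W \<longleftrightarrow> W \<subseteq> V \<and>
     (\<forall>u\<in>V. \<forall>v\<in>V. u \<noteq> v \<longrightarrow> (\<exists>w\<in>W. dist V E u w \<noteq> dist V E v w))"

definition metric_dimension :: "'a set \<Rightarrow> ('a \<Rightarrow> 'a \<Rightarrow> bool) \<Rightarrow> nat" where
  "metric_dimension V E = (LEAST k. \<exists>W. resolving_set V E W \<and> card W = k)"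

definition is_cycle :: "'a set \<Rightarrow> ('a \<Rightarrow> 'a \<Rightarrow> bool) \<Rightarrow> 'a list \<Rightarrow> bool" where
  "is_cycle V E c \<longleftrightarrow> length c \<ge> 3 \<and> distinct c \<and> set c \<subseteq> V \<and>
     (\<forall>i < length c. E (c ! i) (c ! ((Suc i) mod length c)))"

definition has_cycle :: "'a set \<Rightarrow> ('a \<Rightarrow> 'a \<Rightarrow> bool) \<Rightarrow> bool" where
  "has_cycle V E \<longleftrightarrow> (\<exists>c. is_cycle V E c)"

definition girth :: "'a set \<Rightarrow> ('a \<Rightarrow> 'a \<Rightarrow> bool) \<Rightarrow> nat" where
  "girth V E = (LEAST k. \<exists>c. is_cycle V E c \<and> length c = k)"

end

theory Submission
  imports Defs
begin

text \<open>Let c be a shortest cycle, of length g. A shortcut between two vertices of c,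
  together with the shorter arc of c between them, would close a shorter cycle, so
  distances in G between vertices of c are distances along c. Consequently two
  adjacent vertices of c resolve all vertices of c, and deleting the other g - 2
  vertices of c from V leaves a resolving set: the remaining vertices resolve
  themselves.\<close>

lemma is_walk_Nil [simp]: "\<not> is_walk V E []"
  by (simp add: is_walk_def)

lemma is_walk_singleton [simp]: "is_walk V E [x] \<longleftrightarrow> x \<in> V"
  by (simp add: is_walk_def)

lemma is_walk_Cons_Cons [simp]:
  "is_walk V E (x # y # zs) \<longleftrightarrow> x \<in> V \<and> E x y \<and> is_walk V E (y # zs)"
proof -
  have "(\<forall>i. Suc i < length (x # y # zs) \<longrightarrow> E ((x # y # zs) ! i) ((x # y # zs) ! Suc i))
    \<longleftrightarrow> E x y \<and> (\<forall>i. Suc i < length (y # zs) \<longrightarrow> E ((y # zs) ! i) ((y # zs) ! Suc i))"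
    by (auto simp: All_less_Suc2 less_Suc_eq_0_disj)
  then show ?thesis
    by (auto simp: is_walk_def)
qed

lemma is_walk_subset: "is_walk V E p \<Longrightarrow> set p \<subseteq> V"
  by (simp add: is_walk_def)

lemma is_walk_append:
  "xs \<noteq> [] \<Longrightarrow> ys \<noteq> [] \<Longrightarrow>
    is_walk V E (xs @ ys) \<longleftrightarrow> is_walk V E xs \<and> is_walk V E ys \<and> E (last xs) (hd ys)"
proof (induction xs rule: list_nonempty_induct)
  case (single x)
  then show ?case by (cases ys) auto
next
  case (cons x xs)
  then show ?case by (cases xs) auto
qed

lemma is_walk_appendD1: "is_walk V E (xs @ ys) \<Longrightarrow> xs \<noteq> [] \<Longrightarrow> is_walk V E xs"
  by (cases "ys = []") (auto simp: is_walk_append)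

lemma is_walk_appendD2: "is_walk V E (xs @ ys) \<Longrightarrow> ys \<noteq> [] \<Longrightarrow> is_walk V E ys"
  by (cases "xs = []") (auto simp: is_walk_append)

lemma is_walk_join:
  "is_walk V E (xs @ [y]) \<Longrightarrow> is_walk V E (y # ys) \<Longrightarrow> is_walk V E (xs @ y # ys)"
  by (cases "xs = []") (auto simp: is_walk_append)

lemma is_walk_rev:
  assumes "symp E" and "is_walk V E p"
  shows "is_walk V E (rev p)"
  using assms(2)
proof (induction p)
  case (Cons x xs)
  show ?case
  proof (cases xs)
    case (Cons y ys)
    with Cons.prems have "is_walk V E (rev xs)" "E y x" "x \<in> V"
      using Cons.IH assms(1) by (auto dest: sympD)
    then have "is_walk V E (rev xs @ [x])"
      by (subst is_walk_append) (auto simp: last_rev Cons)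
    then show ?thesis by simp
  qed (use Cons.prems in simp)
qed simp

lemma dist_less_length:
  assumes "is_walk V E p" "hd p = x" "last p = y"
  shows "dist V E x y < length p"
proof -
  have "p \<noteq> []" using assms(1) by auto
  then have "dist V E x y \<le> length p - 1"
    unfolding dist_def by (intro Least_le) (use assms in auto)
  with \<open>p \<noteq> []\<close> show ?thesis by (cases p) auto
qed

lemma shortest_path_exists:
  assumes "connected_graph V E" "x \<in> V" "y \<in> V"
  obtains p where "is_walk V E p" "hd p = x" "last p = y" "length p = Suc (dist V E x y)"
    "distinct p"
proof -
  obtain p0 where p0: "is_walk V E p0" "hd p0 = x" "last p0 = y"
    using assms unfolding connected_graph_def by blast
  then have "length p0 = Suc (length p0 - 1)"
    by (cases p0) simp_all
  with p0 have "\<exists>k p. is_walk V E p \<and> hd p = x \<and> last p = y \<and> length p = Suc k"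
    by blast
  then have "\<exists>p. is_walk V E p \<and> hd p = x \<and> last p = y \<and> length p = Suc (dist V E x y)"
    unfolding dist_def by (rule LeastI_ex)
  then obtain p where p: "is_walk V E p" "hd p = x" "last p = y" "length p = Suc (dist V E x y)"
    by blast
  have "distinct p"
  proof (rule ccontr)
    \<comment> \<open>cutting out the part between two occurrences of a vertex gives a shorter walk\<close>
    assume "\<not> distinct p"
    then obtain as z bs cs where p_eq: "p = as @ [z] @ bs @ [z] @ cs"
      using not_distinct_decomp by blast
    have "is_walk V E (as @ [z])"
      using is_walk_appendD1[of V E "as @ [z]" "bs @ [z] @ cs"] p(1) by (simp add: p_eq)
    moreover have "is_walk V E (z # cs)"
      using is_walk_appendD2[of V E "as @ [z] @ bs" "z # cs"] p(1) by (simp add: p_eq)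
    ultimately have "is_walk V E (as @ z # cs)"
      by (rule is_walk_join)
    moreover have "hd (as @ z # cs) = x"
      using p(2) by (cases as) (auto simp: p_eq)
    moreover have "last (as @ z # cs) = y"
      using p(3) by (cases cs rule: rev_cases) (auto simp: p_eq)
    ultimately have "dist V E x y < length (as @ z # cs)"
      by (rule dist_less_length)
    then show False using p(4) by (simp add: p_eq)
  qed
  with p that show ?thesis by blast
qed

lemma dist_self [simp]: "x \<in> V \<Longrightarrow> dist V E x x = 0"
  using dist_less_length[of V E "[x]" x x] by simp

lemma dist_eq_0_iff:
  assumes "connected_graph V E" "x \<in> V" "y \<in> V"
  shows "dist V E x y = 0 \<longleftrightarrow> x = y"
proof
  assume "dist V E x y = 0"
  moreover obtain p where "hd p = x" "last p = y" "length p = Suc (dist V E x y)"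
    using shortest_path_exists[OF assms] by blast
  ultimately show "x = y"
    by (auto simp: length_Suc_conv)
qed (use assms in simp)

lemma dist_commute:
  assumes "symp E" "connected_graph V E" "x \<in> V" "y \<in> V"
  shows "dist V E x y = dist V E y x"
proof -
  have le: "dist V E b a \<le> dist V E a b" if ab: "a \<in> V" "b \<in> V" for a b
  proof -
    obtain p where p: "is_walk V E p" "hd p = a" "last p = b" "length p = Suc (dist V E a b)"
      using shortest_path_exists[OF assms(2) ab] by blast
    have "p \<noteq> []" using p(1) by auto
    have "is_walk V E (rev p)" using is_walk_rev[OF assms(1) p(1)] .
    then have "dist V E b a < length (rev p)"
      by (rule dist_less_length) (use p(2,3) \<open>p \<noteq> []\<close> in \<open>simp_all add: hd_rev last_rev\<close>)
    with p(4) show ?thesis by simp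
  qed
  show ?thesis using le[of x y] le[of y x] assms(3,4) by simp
qed

lemma is_cycle_iff_closed_walk:
  "is_cycle V E c \<longleftrightarrow> 3 \<le> length c \<and> distinct c \<and> is_walk V E (c @ [hd c])"
proof (cases "c = []")
  case False
  have nth_closed: "(c @ [hd c]) ! Suc i = c ! (Suc i mod length c)" if "i < length c" for i
  proof (cases "Suc i < length c")
    case False
    then have "Suc i = length c" using that by simp
    with \<open>c \<noteq> []\<close> show ?thesis by (simp add: nth_append hd_conv_nth)
  qed (simp add: nth_append)
  have "(\<forall>i < length c. E (c ! i) (c ! (Suc i mod length c))) \<longleftrightarrow>
    (\<forall>i. Suc i < length (c @ [hd c]) \<longrightarrow> E ((c @ [hd c]) ! i) ((c @ [hd c]) ! Suc i))"
    by (simp add: nth_closed nth_append_left)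
  with False show ?thesis
    by (auto simp: is_cycle_def is_walk_def)
qed (simp add: is_cycle_def)

lemma is_cycle_rotate:
  assumes "is_cycle V E c"
  shows "is_cycle V E (rotate k c)"
proof -
  let ?g = "length c"
  have "c \<noteq> []" and edge: "\<And>i. i < ?g \<Longrightarrow> E (c ! i) (c ! (Suc i mod ?g))"
    using assms by (auto simp: is_cycle_def)
  have "E (rotate k c ! n) (rotate k c ! (Suc n mod ?g))" if "n < ?g" for n
  proof -
    have "rotate k c ! n = c ! ((k + n) mod ?g)" "rotate k c ! (Suc n mod ?g) = c ! ((k + Suc n) mod ?g)"
      using that \<open>c \<noteq> []\<close> by (simp_all add: nth_rotate mod_add_right_eq)
    moreover have "(k + Suc n) mod ?g = Suc ((k + n) mod ?g) mod ?g"
      by (simp add: mod_Suc_eq)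
    ultimately show ?thesis
      using edge[of "(k + n) mod ?g"] \<open>c \<noteq> []\<close> by simp
  qed
  with assms show ?thesis
    by (simp add: is_cycle_def)
qed

lemma girth_le_length: "is_cycle V E c \<Longrightarrow> girth V E \<le> length c"
  unfolding girth_def by (rule Least_le) blast

lemma shortest_cycle_exists:
  assumes "has_cycle V E"
  obtains c where "is_cycle V E c" "length c = girth V E"
proof -
  have "\<exists>k c. is_cycle V E c \<and> length c = k"
    using assms unfolding has_cycle_def by blast
  then have "\<exists>c. is_cycle V E c \<and> length c = girth V E"
    unfolding girth_def by (rule LeastI_ex)
  with that show ?thesis by blast
qed

text \<open>Let y be the first vertex of Q lying on P: going out along P to y and
  back along Q closes a cycle through x.\<close>

lemma cycle_from_diverging_paths:
  assumes sym: "symp E"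
    and walk_P: "is_walk V E (x # P)" and walk_Q: "is_walk V E (x # Q)"
    and dist_P: "distinct (x # P)" and dist_Q: "distinct (x # Q)"
    and "P \<noteq> []" "Q \<noteq> []" "last P = last Q" "hd P \<noteq> hd Q"
  obtains c where "is_cycle V E c" "length c \<le> length P + length Q"
proof -
  define A where "A = takeWhile (\<lambda>v. v \<notin> set P) Q"
  have "last Q \<in> set P"
    using \<open>P \<noteq> []\<close> \<open>last P = last Q\<close> by (metis last_in_set)
  then have "dropWhile (\<lambda>v. v \<notin> set P) Q \<noteq> []"
    using \<open>Q \<noteq> []\<close> by (metis dropWhile_eq_Nil_conv last_in_set)
  then obtain y R where Q_eq: "Q = A @ y # R" and "y \<in> set P"
    unfolding A_def by (metis takeWhile_dropWhile_id hd_dropWhile list.exhaust_sel)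
  then obtain B C where P_eq: "P = B @ y # C"
    by (meson split_list)
  have A_disj: "set A \<inter> set P = {}"
    unfolding A_def by (auto dest: set_takeWhileD)
  define c where "c = x # B @ y # rev A"
  have "is_walk V E (x # B @ [y])"
    using is_walk_appendD1[of V E "x # B @ [y]" C] walk_P by (simp add: P_eq)
  moreover have "is_walk V E (x # A @ [y])"
    using is_walk_appendD1[of V E "x # A @ [y]" R] walk_Q by (simp add: Q_eq)
  then have "is_walk V E (y # rev A @ [x])"
    using is_walk_rev[OF sym] by fastforce
  ultimately have "is_walk V E (c @ [hd c])"
    using is_walk_join[of V E "x # B" y "rev A @ [x]"] by (simp add: c_def)
  moreover have "distinct c"
    using dist_P dist_Q A_disj by (auto simp: c_def P_eq Q_eq)
  moreover have "3 \<le> length c"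
    using \<open>hd P \<noteq> hd Q\<close> by (cases A; cases B) (auto simp: c_def P_eq Q_eq)
  ultimately have "is_cycle V E c"
    by (simp add: is_cycle_iff_closed_walk)
  moreover have "length c \<le> length P + length Q"
    by (simp add: c_def P_eq Q_eq)
  ultimately show ?thesis using that by blast
qed

lemma cycle_from_two_paths:
  assumes sym: "symp E"
  shows "is_walk V E p \<Longrightarrow> is_walk V E q \<Longrightarrow> distinct p \<Longrightarrow> distinct q \<Longrightarrow>
    hd p = hd q \<Longrightarrow> last p = last q \<Longrightarrow> p \<noteq> q \<Longrightarrow>
    \<exists>c. is_cycle V E c \<and> length c + 2 \<le> length p + length q"
proof (induction p arbitrary: q)
  case (Cons x P)
  then obtain Q where q_eq: "q = x # Q"
    by (cases q) auto
  have "P \<noteq> []"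
  proof
    assume "P = []"
    with Cons.prems have "last Q = x \<or> Q = []" by (simp add: q_eq split: if_splits)
    with Cons.prems \<open>P = []\<close> show False
      by (auto simp: q_eq dest: last_in_set)
  qed
  moreover have "Q \<noteq> []"
  proof
    assume "Q = []"
    with Cons.prems have "last P = x \<or> P = []" by (simp add: q_eq split: if_splits)
    with Cons.prems \<open>Q = []\<close> show False
      by (auto simp: q_eq dest: last_in_set)
  qed
  moreover have walks: "is_walk V E P" "is_walk V E Q"
    using Cons.prems(1,2) \<open>P \<noteq> []\<close> \<open>Q \<noteq> []\<close>
    by (auto simp: q_eq intro: is_walk_appendD2[of V E "[x]"])
  ultimately show ?case
  proof (cases "hd P = hd Q")
    case True
    with Cons.prems walks show ?thesis
      using Cons.IH[of Q] \<open>P \<noteq> []\<close> \<open>Q \<noteq> []\<close> by (fastforce simp: q_eq)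
  next
    case False
    obtain c where "is_cycle V E c" "length c \<le> length P + length Q"
      by (rule cycle_from_diverging_paths[OF sym])
        (use Cons.prems False \<open>P \<noteq> []\<close> \<open>Q \<noteq> []\<close> in \<open>auto simp: q_eq\<close>)
    then show ?thesis by (auto simp: q_eq)
  qed
qed simp

lemma girth_le_dist_add_length:
  assumes sym: "symp E" and conn: "connected_graph V E"
    and T: "is_walk V E T" "distinct T" "hd T = x" "last T = y"
    and not_shortest: "dist V E x y < length T - 1"
  shows "girth V E \<le> dist V E x y + (length T - 1)"
proof -
  have "T \<noteq> []" using T(1) by auto
  then have "x \<in> V" "y \<in> V"
    using is_walk_subset[OF T(1)] T(3,4) by auto
  then obtain P where P: "is_walk V E P" "hd P = x" "last P = y"
      "length P = Suc (dist V E x y)" "distinct P"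
    using shortest_path_exists[OF conn] by metis
  have "P \<noteq> T" using P(4) not_shortest by auto
  then obtain c where "is_cycle V E c" "length c + 2 \<le> length P + length T"
    using cycle_from_two_paths[OF sym P(1) T(1) P(5) T(2)] P(2,3) T(3,4) by auto
  with girth_le_length[of V E c] P(4) show ?thesis by simp
qed

lemma dist_shortest_cycle_hd:
  assumes sym: "symp E" and conn: "connected_graph V E"
    and cyc: "is_cycle V E c" and shortest: "length c = girth V E" and i: "i < length c"
  shows "dist V E (c ! 0) (c ! i) = min i (length c - i)"
proof -
  let ?g = "length c" and ?d = "dist V E (c ! 0) (c ! i)"
  have "c \<noteq> []" "distinct c" "is_walk V E (c @ [hd c])"
    using cyc by (auto simp: is_cycle_iff_closed_walk)
  then have closed: "is_walk V E (c @ [c ! 0])"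
    by (simp add: hd_conv_nth)
  define T where "T = take (Suc i) c"
  have "is_walk V E (T @ (drop (Suc i) c @ [c ! 0]))"
    using closed by (metis T_def append_assoc append_take_drop_id)
  then have T_walk: "is_walk V E T"
    by (rule is_walk_appendD1) (use \<open>c \<noteq> []\<close> in \<open>simp add: T_def\<close>)
  have "hd T = c ! 0"
    using \<open>c \<noteq> []\<close> by (cases c) (simp_all add: T_def)
  moreover have "last T = c ! i" and T_len: "length T = Suc i"
    using i by (simp_all add: T_def take_Suc_conv_app_nth)
  ultimately have T_ends: "hd T = c ! 0" "last T = c ! i" by blast+
  define D where "D = rev (drop i c @ [c ! 0])"
  have "is_walk V E (take i c @ (drop i c @ [c ! 0]))"
    using closed by (metis append_assoc append_take_drop_id)
  then have "is_walk V E (drop i c @ [c ! 0])"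
    by (rule is_walk_appendD2) simp
  then have D_walk: "is_walk V E D"
    unfolding D_def by (rule is_walk_rev[OF sym])
  have D_ends: "hd D = c ! 0" "last D = c ! i" and D_len: "length D = Suc (?g - i)"
    using i by (simp_all add: D_def last_rev hd_drop_conv_nth)
  have "?d \<le> i" "?d \<le> ?g - i"
    using dist_less_length[OF T_walk T_ends] dist_less_length[OF D_walk D_ends] T_len D_len
    by simp_all
  moreover have "\<not> ?d < min i (?g - i)"
  proof
    assume "?d < min i (?g - i)"
    then have "girth V E \<le> ?d + i"
      using girth_le_dist_add_length[OF sym conn T_walk _ T_ends] \<open>distinct c\<close> T_len
      by (simp add: T_def)
    with \<open>?d < min i (?g - i)\<close> shortest i show False by linarith
  qed
  ultimately show ?thesis by linarith
qed

lemma dist_shortest_cycle: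
  assumes sym: "symp E" and conn: "connected_graph V E"
    and cyc: "is_cycle V E c" and shortest: "length c = girth V E"
    and "k < length c" "i < length c"
  shows "dist V E (c ! k) (c ! ((k + i) mod length c)) = min i (length c - i)"
proof -
  have "c \<noteq> []" using assms(5) by auto
  then have "rotate k c ! 0 = c ! k" "rotate k c ! i = c ! ((k + i) mod length c)"
    using nth_rotate[of 0 c k] nth_rotate[of i c k] assms(5,6) by (simp_all add: add.commute)
  moreover have "dist V E (rotate k c ! 0) (rotate k c ! i) = min i (length c - i)"
    using dist_shortest_cycle_hd[OF sym conn is_cycle_rotate[OF cyc], of k i] shortest assms(6)
    by simp
  ultimately show ?thesis by simp
qed

text \<open>On a cycle of length g, vertex i lies at distance min i (g - i) from vertex 0
  and at distance min (i + 1) (g - i - 1) from vertex g - 1.\<close>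

lemma cycle_distances_to_adjacent_inj:
  fixes g i j :: nat
  assumes "Suc i < g" "Suc j < g"
    and "min i (g - i) = min j (g - j)" "min (Suc i) (g - Suc i) = min (Suc j) (g - Suc j)"
  shows "i = j"
proof (rule ccontr)
  assume "i \<noteq> j"
  with assms(1-3) have "i + j = g"
    unfolding min_def by (simp split: if_splits)
  with assms(1,2,4) \<open>i \<noteq> j\<close> show False
    unfolding min_def by (simp split: if_splits; arith)
qed

lemma shortest_cycle_resolved_by_ends:
  assumes sym: "symp E" and conn: "connected_graph V E"
    and cyc: "is_cycle V E c" and shortest: "length c = girth V E"
    and "Suc i < length c" "Suc j < length c" "i \<noteq> j"
  shows "\<exists>w\<in>{c ! 0, c ! (length c - 1)}. dist V E (c ! i) w \<noteq> dist V E (c ! j) w"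
proof -
  let ?g = "length c"
  have in_V: "c ! k \<in> V" if "k < ?g" for k
    using cyc that by (auto simp: is_cycle_def)
  have dist_first: "dist V E (c ! k) (c ! 0) = min k (?g - k)" if "Suc k < ?g" for k
    using dist_shortest_cycle[OF sym conn cyc shortest, of 0 k] that
      dist_commute[OF sym conn in_V in_V, of k 0] by fastforce
  have dist_last: "dist V E (c ! k) (c ! (?g - 1)) = min (Suc k) (?g - Suc k)" if "Suc k < ?g" for k
  proof -
    have "?g - 1 + Suc k = k + ?g"
      using that by simp
    then have "(?g - 1 + Suc k) mod ?g = k"
      using that by simp
    then show ?thesis
      using dist_shortest_cycle[OF sym conn cyc shortest, of "?g - 1" "Suc k"] that
        dist_commute[OF sym conn in_V in_V, of k "?g - 1"] by simp
  qed
  show ?thesis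
    using cycle_distances_to_adjacent_inj[of i ?g j] dist_first dist_last assms(5-7) by auto
qed

lemma resolving_set_Diff:
  assumes conn: "connected_graph V E" and "X \<subseteq> V"
    and resolves: "\<And>u v. u \<in> X \<Longrightarrow> v \<in> X \<Longrightarrow> u \<noteq> v \<Longrightarrow>
      \<exists>w\<in>V - X. dist V E u w \<noteq> dist V E v w"
  shows "resolving_set V E (V - X)"
  unfolding resolving_set_def
proof (intro conjI ballI impI)
  fix u v assume uv: "u \<in> V" "v \<in> V" "u \<noteq> v"
  show "\<exists>w\<in>V - X. dist V E u w \<noteq> dist V E v w"
  proof (cases "u \<in> X \<and> v \<in> X")
    case False
    with uv dist_eq_0_iff[OF conn] show ?thesis
      by (metis Diff_iff dist_self)
  qed (use uv resolves in blast)
qed blast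

lemma metric_dimension_le_card: "resolving_set V E W \<Longrightarrow> metric_dimension V E \<le> card W"
  unfolding metric_dimension_def by (rule Least_le) blast

lemma resolving_set_Diff_shortest_cycle:
  assumes sym: "symp E" and conn: "connected_graph V E"
    and cyc: "is_cycle V E c" and shortest: "length c = girth V E"
  shows "resolving_set V E (V - set (butlast (tl c)))"
proof -
  let ?g = "length c"
  have "3 \<le> ?g" "distinct c" "set c \<subseteq> V"
    using cyc by (auto simp: is_cycle_def)
  obtain a c' where "c = a # c'"
    using \<open>3 \<le> ?g\<close> by (cases c) auto
  moreover obtain M b where "c' = M @ [b]"
    using \<open>3 \<le> ?g\<close> calculation by (cases c' rule: rev_cases) auto
  ultimately have c_eq: "c = a # M @ [b]"
    by simp
  have ends: "c ! 0 = a" "c ! (?g - 1) = b"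
    by (simp_all add: c_eq nth_append)
  have M_nth: "\<exists>i. Suc i < ?g \<and> v = c ! i" if "v \<in> set M" for v
  proof -
    obtain k where "k < length M" "v = M ! k"
      using \<open>v \<in> set M\<close> by (auto simp: in_set_conv_nth)
    then show ?thesis
      by (intro exI[of _ "Suc k"]) (simp add: c_eq nth_append)
  qed
  show ?thesis
  proof (rule resolving_set_Diff[OF conn])
    show "set (butlast (tl c)) \<subseteq> V"
      using \<open>set c \<subseteq> V\<close> by (auto simp: c_eq)
  next
    fix u v assume "u \<in> set (butlast (tl c))" "v \<in> set (butlast (tl c))" "u \<noteq> v"
    then obtain i j where "Suc i < ?g" "Suc j < ?g" "i \<noteq> j" "u = c ! i" "v = c ! j"
      using M_nth by (metis c_eq butlast_snoc list.sel(3))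
    then obtain w where "w \<in> {a, b}" "dist V E u w \<noteq> dist V E v w"
      using shortest_cycle_resolved_by_ends[OF sym conn cyc shortest] ends by metis
    moreover have "{a, b} \<subseteq> V - set (butlast (tl c))"
      using \<open>distinct c\<close> \<open>set c \<subseteq> V\<close> by (auto simp: c_eq)
    ultimately show "\<exists>w\<in>V - set (butlast (tl c)). dist V E u w \<noteq> dist V E v w"
      by blast
  qed
qed

theorem theorem2p1:
  fixes V :: "'a set" and E :: "'a \<Rightarrow> 'a \<Rightarrow> bool"
  assumes "simple_graph V E" and "connected_graph V E" and "has_cycle V E"
  shows "int (metric_dimension V E) \<le> int (card V) - int (girth V E) + 2"
proof -
  have sym: "symp E" and "finite V"
    using assms(1) by (auto simp: simple_graph_def symp_def)
  obtain c where cyc: "is_cycle V E c" and shortest: "length c = girth V E"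
    using shortest_cycle_exists[OF assms(3)] .
  let ?X = "set (butlast (tl c))"
  have "distinct c" "set c \<subseteq> V"
    using cyc by (auto simp: is_cycle_def)
  have "?X \<subseteq> set c"
    by (cases c) (auto dest: in_set_butlastD)
  with \<open>set c \<subseteq> V\<close> have X_sub: "?X \<subseteq> V" by blast
  have card_X: "card ?X = girth V E - 2"
    using distinct_card[OF distinct_butlast[OF distinct_tl[OF \<open>distinct c\<close>]]] shortest by simp
  have "metric_dimension V E \<le> card (V - ?X)"
    by (rule metric_dimension_le_card[OF resolving_set_Diff_shortest_cycle[OF sym assms(2) cyc shortest]])
  also have "\<dots> = card V - (girth V E - 2)"
    using card_Diff_subset[OF finite_subset[OF X_sub \<open>finite V\<close>] X_sub] card_X by simp
  finally show ?thesis
    using card_mono[OF \<open>finite V\<close> X_sub] card_X by linarith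
qed

end
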